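(* In the EnSolver setting described in the context (ensemble of $M$ base models, output domain of size $N_{\mathcal{S}}$, threshold $\tau$ with $M(1-\tau)$ a positive integer, and assumptions of independence and (A1)–(A3)), the correct prediction rate of the EnSolver $m$ satisfies $$p\left( m(x) = s_x \right) > \alpha \sum_{i=k}^{M}\binom{M}{i}\beta_{\text{min}}^i (1-\beta_{\text{max}})^{M-i} - \alpha\, \mathcal{E}(M, N_{\mathcal{S}}, \tau),$$ where $k = M(1-\tau) + 1$ and $x \sim p$.
   Context: Setting: $\mathcal{S}$ is a finite set of output strings with $N_{\mathcal{S}} = |\mathcal{S}| \ge 2$; inputs $x \in \mathcal{X}$ are drawn from a probability distribution $p$ on $\mathcal{X}$, each $x$ having a single correct output $s_x \in \mathcal{S}$. $\mathcal{X}$ is the disjoint union of the in-distribution set $\mathcal{X}^{\text{in}}$ and the out-of-distribution set $\mathcal{X}^{\text{out}}$, and $\alpha = p(x \in \mathcal{X}^{\text{in}})$. An ensemble consists of $M$ base models $m_1, \dots, m_M$, each of which produces a (random) prediction $m_i(x) \in \mathcal{S}$ on input $x$; probabilities are taken jointly over $x \sim p$ and the predictions, and the base models make their predictions independently of each other given the input (in particular conditionally on $x \in \mathcal{X}^{\text{in}}$ and conditionally on $x \in \mathcal{X}^{\text{out}}$). Let $\beta_i = p(m_i(x) = s_x \mid x \in \mathcal{X}^{\text{in}})$, $\beta_{\text{min}} = \min_i \beta_i$, $\beta_{\text{max}} = \max_i \beta_i$. Assumptions: (A1) $\beta_{\text{min}} > 1/N_{\mathcal{S}}$; (A2) for each $i$,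 conditionally on $x \in \mathcal{X}^{\text{in}}$, $m_i(x)$ equals each incorrect string $s \neq s_x$ with probability $(1-\beta_i)/(N_{\mathcal{S}}-1)$; (A3) for each $i$, conditionally on $x \in \mathcal{X}^{\text{out}}$, $m_i(x)$ equals each $s \in \mathcal{S}$ with probability $1/N_{\mathcal{S}}$. For $x$ and $s \in \mathcal{S}$, $n(x,s)$ is the number of base models with $m_i(x) = s$. The threshold $\tau \in (0,1]$ is such that $M(1-\tau)$ is a positive integer. The EnSolver $m$ acts as follows on input $x$: let $p_{\max} = \max_{s} n(x,s)/M$ and uncertainty $u = 1 - p_{\max}$; if $u < \tau$ it outputs a string $y$ maximizing $n(x,\cdot)$, otherwise it outputs a special skip symbol $s_{\text{skip}}$. The out-of-distribution error bound is $\mathcal{E}(M, N_{\mathcal{S}}, \tau) = \binom{M}{\lfloor M/2 \rfloor} (N_{\mathcal{S}})^{-M(1-\tau)}$. *)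

theory Defs
  imports "HOL-Probability.Probability"
begin

text \<open>Given x, model i predicts according to the pmf pred i x, independently of the
  other models (product pmf over the indices 0..M-1).\<close>
definition joint :: "nat \<Rightarrow> 'x pmf \<Rightarrow> (nat \<Rightarrow> 'x \<Rightarrow> 's pmf) \<Rightarrow> ('x \<times> (nat \<Rightarrow> 's)) pmf" where
  "joint M p pred =
     bind_pmf p (\<lambda>x. map_pmf (\<lambda>ys. (x, ys)) (Pi_pmf {..<M} undefined (\<lambda>i. pred i x)))"

definition alpha_in :: "'x pmf \<Rightarrow> 'x set \<Rightarrow> real" where
  "alpha_in p Xin = measure_pmf.prob p Xin"

definition beta_acc ::
  "nat \<Rightarrow> 'x pmf \<Rightarrow> (nat \<Rightarrow> 'x \<Rightarrow> 's pmf) \<Rightarrow> 'x set \<Rightarrow> ('x \<Rightarrow> 's) \<Rightarrow> nat \<Rightarrow> real" where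
  "beta_acc M p pred Xin sx i =
     measure_pmf.prob (joint M p pred) {(x, ys). x \<in> Xin \<and> ys i = sx x} / alpha_in p Xin"

definition votes :: "nat \<Rightarrow> (nat \<Rightarrow> 's) \<Rightarrow> 's \<Rightarrow> nat" where
  "votes M ys s = card {i. i < M \<and> ys i = s}"

definition pmax :: "nat \<Rightarrow> 's set \<Rightarrow> (nat \<Rightarrow> 's) \<Rightarrow> real" where
  "pmax M S ys = Max ((\<lambda>s. real (votes M ys s) / real M) ` S)"

text \<open>EnSolver output; None is the skip symbol; y is the chosen maximiser of votes.\<close>
definition ensolver :: "nat \<Rightarrow> 's set \<Rightarrow> real \<Rightarrow> 's \<Rightarrow> (nat \<Rightarrow> 's) \<Rightarrow> 's option" where
  "ensolver M S \<tau> y ys = (if 1 - pmax M S ys < \<tau> then Some y else None)"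

definition ood_err_bound :: "nat \<Rightarrow> nat \<Rightarrow> real \<Rightarrow> real" where
  "ood_err_bound M N \<tau> = real (M choose (M div 2)) * real N powr (- (real M * (1 - \<tau>)))"

end

theory Submission
  imports Defs
begin

(* For an in-distribution input x, (A2) puts mass exactly 1 - beta_i on the wrong strings, so model i
   is correct on x with probability at most beta_i; as beta_i is the average of that probability over
   X_in, it equals beta_i for every such x.  Given x, the EnSolver is correct as soon as the right
   string gets more than K = M(1 - tau) votes and no wrong string does.  The first event splits over
   the set of models voting correctly, each piece having probability at least
   beta_min^i (1 - beta_max)^(M - i); a fixed wrong string gets K + 1 votes with probability at most
   C(M, K + 1) r^(K + 1) by a union bound over (K + 1)-sets of models, where r = (1 - beta_min)/(N - 1)
   is below 1/N by (A1), so the N - 1 wrong strings together stay strictly below the bound E.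
   Out-of-distribution inputs only enter through the trivial bound 0. *)

lemma measure_bind_pmf:
  "measure_pmf.prob (bind_pmf p f) A = (\<integral>x. measure_pmf.prob (f x) A \<partial>p)"
  unfolding measure_pmf_bind
  by (subst measure_pmf.measure_bind[where N = "count_space UNIV"])
     (auto simp: measurable_measure_pmf space_subprob_algebra measure_pmf.subprob_space_axioms)

lemma eq_on_set_pmf_if_integral_eq_bound:
  fixes g :: "'x \<Rightarrow> real"
  assumes "integrable (measure_pmf p) g"
    and le: "\<And>x. x \<in> set_pmf p \<inter> A \<Longrightarrow> g x \<le> c"
    and eq: "(\<integral>x. indicator A x * g x \<partial>p) = measure_pmf.prob p A * c"
    and x: "x \<in> set_pmf p \<inter> A"
  shows "g x = c"
proof -
  let ?h = "\<lambda>x. indicator A x * (c - g x)"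
  have int_A: "integrable (measure_pmf p) (\<lambda>x. indicator A x * c :: real)"
    by (rule measure_pmf.integrable_const_bound[where B = "\<bar>c\<bar>"]) (auto simp: indicator_def)
  have int_g: "integrable (measure_pmf p) (\<lambda>x. indicator A x * g x)"
    using integrable_real_mult_indicator[OF _ assms(1), of A] by (simp add: mult.commute)
  have int: "integrable (measure_pmf p) ?h"
    using int_A int_g by (simp add: right_diff_distrib)
  have "(\<integral>x. ?h x \<partial>p) = measure_pmf.prob p A * c - (\<integral>x. indicator A x * g x \<partial>p)"
    using int_A int_g by (simp add: right_diff_distrib)
  then have "(\<integral>x. ?h x \<partial>p) = 0"
    using eq by simp
  moreover have "AE x in p. 0 \<le> ?h x"
    using le by (auto simp: AE_measure_pmf_iff indicator_def)
  ultimately have "AE x in p. ?h x = 0"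
    using integral_nonneg_eq_0_iff_AE[OF int] by simp
  then show ?thesis
    using x by (auto simp: AE_measure_pmf_iff)
qed

lemma integral_ge_prob_times_bound:
  fixes f :: "'x \<Rightarrow> real"
  assumes "integrable (measure_pmf p) f"
    and nonneg: "\<And>x. x \<in> set_pmf p \<Longrightarrow> 0 \<le> f x"
    and ge: "\<And>x. x \<in> set_pmf p \<inter> A \<Longrightarrow> c \<le> f x"
  shows "measure_pmf.prob p A * c \<le> (\<integral>x. f x \<partial>p)"
proof -
  have int_A: "integrable (measure_pmf p) (\<lambda>x. indicator A x * c)"
    by (rule measure_pmf.integrable_const_bound[where B = "\<bar>c\<bar>"]) (auto simp: indicator_def)
  have "measure_pmf.prob p A * c = (\<integral>x. indicator A x * c \<partial>p)"
    by simp
  also have "\<dots> \<le> (\<integral>x. f x \<partial>p)"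
    using int_A assms(1) nonneg ge
    by (intro integral_mono_AE) (auto simp: AE_measure_pmf_iff indicator_def)
  finally show ?thesis .
qed

lemma sum_subsets_card_ge:
  fixes f :: "nat \<Rightarrow> 'a::comm_semiring_1"
  assumes "finite I"
  shows "(\<Sum>A | A \<subseteq> I \<and> k \<le> card A. f (card A)) = (\<Sum>i = k..card I. of_nat (card I choose i) * f i)"
proof -
  let ?U = "{A. A \<subseteq> I \<and> k \<le> card A}"
  have "(\<Sum>A\<in>?U. f (card A)) = (\<Sum>i = k..card I. \<Sum>A\<in>{A \<in> ?U. card A = i}. f (card A))"
    using assms by (intro sum.group[symmetric]) (auto intro: card_mono)
  also have "\<dots> = (\<Sum>i = k..card I. \<Sum>A | A \<subseteq> I \<and> card A = i. f i)"
    by (intro sum.cong) auto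
  also have "\<dots> = (\<Sum>i = k..card I. of_nat (card I choose i) * f i)"
    using assms by (simp add: n_subsets)
  finally show ?thesis .
qed

lemma prob_Pi_pmf_hit_set_eq:
  assumes "finite I" "A \<subseteq> I"
  shows "measure_pmf.prob (Pi_pmf I d q) {ys. {i \<in> I. ys i = t} = A}
       = (\<Prod>i\<in>A. pmf (q i) t) * (\<Prod>i\<in>I - A. 1 - pmf (q i) t)"
proof -
  have miss: "measure_pmf.prob (q i) (- {t}) = 1 - pmf (q i) t" for i
    using measure_pmf.prob_compl[of "{t}" "q i"] by (simp add: Compl_eq_Diff_UNIV measure_pmf_single)
  have "{ys. {i \<in> I. ys i = t} = A} = Pi I (\<lambda>i. if i \<in> A then {t} else - {t})"
    using assms(2) by (auto simp: Pi_def split: if_splits)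
  then have "measure_pmf.prob (Pi_pmf I d q) {ys. {i \<in> I. ys i = t} = A}
      = (\<Prod>i\<in>I. if i \<in> A then pmf (q i) t else 1 - pmf (q i) t)"
    using assms(1) by (simp add: measure_Pi_pmf_Pi if_distrib measure_pmf_single miss cong: if_cong)
  also have "\<dots> = (\<Prod>i\<in>A. pmf (q i) t) * (\<Prod>i\<in>I - A. 1 - pmf (q i) t)"
    using assms by (simp add: prod.If_cases Int_absorb1 Diff_eq)
  finally show ?thesis .
qed

lemma prob_Pi_pmf_many_hits_ge:
  assumes "finite I"
    and bounds: "\<And>i. i \<in> I \<Longrightarrow> lo \<le> pmf (q i) t \<and> pmf (q i) t \<le> hi" and "0 \<le> lo" "hi \<le> 1"
  shows "(\<Sum>j = k..card I. real (card I choose j) * lo ^ j * (1 - hi) ^ (card I - j))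
       \<le> measure_pmf.prob (Pi_pmf I d q) {ys. k \<le> card {i \<in> I. ys i = t}}"
proof -
  let ?Q = "Pi_pmf I d q" and ?U = "{A. A \<subseteq> I \<and> k \<le> card A}"
  let ?hits = "\<lambda>A. {ys. {i \<in> I. ys i = t} = A}"
  have "(\<Sum>j = k..card I. real (card I choose j) * lo ^ j * (1 - hi) ^ (card I - j))
      = (\<Sum>A\<in>?U. lo ^ card A * (1 - hi) ^ (card I - card A))"
    using sum_subsets_card_ge[OF assms(1), where k = k and f = "\<lambda>j. lo ^ j * (1 - hi) ^ (card I - j)"]
    by (simp add: mult.assoc)
  also have "\<dots> \<le> (\<Sum>A\<in>?U. measure_pmf.prob ?Q (?hits A))"
  proof (intro sum_mono)
    fix A assume A: "A \<in> ?U"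
    then have "lo ^ card A * (1 - hi) ^ (card I - card A) = (\<Prod>i\<in>A. lo) * (\<Prod>i\<in>I - A. 1 - hi)"
      using assms(1) by (auto simp: card_Diff_subset finite_subset)
    also have "\<dots> \<le> (\<Prod>i\<in>A. pmf (q i) t) * (\<Prod>i\<in>I - A. 1 - pmf (q i) t)"
      using A bounds assms(3,4) by (intro mult_mono prod_mono prod_nonneg) (auto simp: subset_iff)
    also have "\<dots> = measure_pmf.prob ?Q (?hits A)"
      using A assms(1) by (simp add: prob_Pi_pmf_hit_set_eq)
    finally show "lo ^ card A * (1 - hi) ^ (card I - card A) \<le> measure_pmf.prob ?Q (?hits A)" .
  qed
  also have "\<dots> = measure_pmf.prob ?Q (\<Union>A\<in>?U. ?hits A)"
    using assms(1) by (intro measure_pmf.finite_measure_finite_Union[symmetric])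
      (auto simp: disjoint_family_on_def)
  also have "(\<Union>A\<in>?U. ?hits A) = {ys. k \<le> card {i \<in> I. ys i = t}}"
    by auto
  finally show ?thesis .
qed

lemma prob_Pi_pmf_many_hits_le:
  assumes "finite I" and bound: "\<And>i. i \<in> I \<Longrightarrow> pmf (q i) s \<le> r"
  shows "measure_pmf.prob (Pi_pmf I d q) {ys. k \<le> card {i \<in> I. ys i = s}} \<le> real (card I choose k) * r ^ k"
proof -
  let ?Q = "Pi_pmf I d q" and ?U = "{A. A \<subseteq> I \<and> card A = k}"
  let ?hits = "\<lambda>A. {ys. \<forall>i\<in>A. ys i = s}"
  have "{ys. k \<le> card {i \<in> I. ys i = s}} \<subseteq> (\<Union>A\<in>?U. ?hits A)"
  proof
    fix ys assume "ys \<in> {ys. k \<le> card {i \<in> I. ys i = s}}"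
    then obtain A where "A \<subseteq> {i \<in> I. ys i = s}" "card A = k"
      by (auto elim: obtain_subset_with_card_n)
    then show "ys \<in> (\<Union>A\<in>?U. ?hits A)" by auto
  qed
  then have "measure_pmf.prob ?Q {ys. k \<le> card {i \<in> I. ys i = s}} \<le> measure_pmf.prob ?Q (\<Union>A\<in>?U. ?hits A)"
    by (rule measure_pmf.finite_measure_mono) simp
  also have "\<dots> \<le> (\<Sum>A\<in>?U. measure_pmf.prob ?Q (?hits A))"
    using assms(1) by (intro measure_pmf.finite_measure_subadditive_finite) auto
  also have "\<dots> \<le> (\<Sum>A\<in>?U. r ^ k)"
  proof (intro sum_mono)
    fix A assume A: "A \<in> ?U"
    have "?hits A = Pi I (\<lambda>i. if i \<in> A then {s} else UNIV)"
      using A by (auto simp: Pi_def)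
    then have "measure_pmf.prob ?Q (?hits A) = (\<Prod>i\<in>I. if i \<in> A then pmf (q i) s else 1)"
      using assms(1) by (simp add: measure_Pi_pmf_Pi if_distrib measure_pmf_single cong: if_cong)
    also have "\<dots> = (\<Prod>i\<in>A. pmf (q i) s)"
      using A assms(1) by (simp add: prod.inter_restrict[symmetric] Int_absorb1)
    also have "\<dots> \<le> (\<Prod>i\<in>A. r)"
      using A bound by (intro prod_mono) auto
    finally show "measure_pmf.prob ?Q (?hits A) \<le> r ^ k" using A by simp
  qed
  also have "\<dots> = real (card I choose k) * r ^ k"
    using assms(1) by (simp add: n_subsets)
  finally show ?thesis .
qed

lemma ensolver_eq_Some_if_majority:
  assumes "finite S" "t \<in> S" "y \<in> S"
    and y_max: "\<forall>s\<in>S. votes M ys s \<le> votes M ys y"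
    and t_major: "real M * (1 - \<tau>) < real (votes M ys t)"
    and others_minor: "\<forall>s\<in>S - {t}. real (votes M ys s) \<le> real M * (1 - \<tau>)"
  shows "ensolver M S \<tau> y ys = Some t"
proof -
  have "y = t"
  proof (rule ccontr)
    assume "y \<noteq> t"
    then have "real (votes M ys y) < real (votes M ys t)"
      using \<open>y \<in> S\<close> others_minor t_major by force
    then show False
      using y_max \<open>t \<in> S\<close> by (simp add: not_le[symmetric])
  qed
  have "M > 0"
    using t_major by (cases M) (auto simp: votes_def)
  then have "1 - \<tau> < real (votes M ys t) / real M"
    using t_major by (simp add: field_simps)
  also have "\<dots> \<le> pmax M S ys"
    unfolding pmax_def using assms(1,2) by (intro Max_ge) auto
  finally show ?thesis
    using \<open>y = t\<close> by (simp add: ensolver_def)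
qed

lemma prob_ensolver_correct_ge:
  fixes q :: "nat \<Rightarrow> 's pmf" and sel :: "(nat \<Rightarrow> 's) \<Rightarrow> 's"
  assumes "finite S" "t \<in> S"
    and supp: "\<And>i. i < M \<Longrightarrow> set_pmf (q i) \<subseteq> S"
    and correct: "\<And>i. i < M \<Longrightarrow> lo \<le> pmf (q i) t \<and> pmf (q i) t \<le> hi"
    and lo_hi: "0 \<le> lo" "hi \<le> 1"
    and wrong: "\<And>i s. i < M \<Longrightarrow> s \<in> S - {t} \<Longrightarrow> pmf (q i) s \<le> r"
    and K: "real M * (1 - \<tau>) = real K"
    and sel_max: "\<And>ys. \<forall>i<M. ys i \<in> S \<Longrightarrow> sel ys \<in> S \<and> (\<forall>s\<in>S. votes M ys s \<le> votes M ys (sel ys))"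
  shows "(\<Sum>j = K + 1..M. real (M choose j) * lo ^ j * (1 - hi) ^ (M - j))
           - real (card S - 1) * (real (M choose (K + 1)) * r ^ (K + 1))
         \<le> measure_pmf.prob (Pi_pmf {..<M} d q) {ys. ensolver M S \<tau> (sel ys) ys = Some t}"
proof -
  let ?Q = "Pi_pmf {..<M} d q"
  let ?correct = "{ys. ensolver M S \<tau> (sel ys) ys = Some t}"
  let ?major = "\<lambda>s. {ys. K + 1 \<le> card {i \<in> {..<M}. ys i = s}}"
  have votes_eq: "votes M ys s = card {i \<in> {..<M}. ys i = s}" for ys s
    unfolding votes_def by (simp add: Collect_conj_eq lessThan_def)
  have cover: "?major t \<inter> set_pmf ?Q \<subseteq> ?correct \<union> (\<Union>s\<in>S - {t}. ?major s)"
  proof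
    fix ys assume ys: "ys \<in> ?major t \<inter> set_pmf ?Q"
    show "ys \<in> ?correct \<union> (\<Union>s\<in>S - {t}. ?major s)"
    proof (cases "ys \<in> (\<Union>s\<in>S - {t}. ?major s)")
      case False
      have "\<forall>i<M. ys i \<in> S"
        using ys set_Pi_pmf_subset'[of "{..<M}" d q] supp by (fastforce simp: PiE_dflt_def)
      then have "ensolver M S \<tau> (sel ys) ys = Some t"
        using ys False sel_max assms(1,2)
        by (intro ensolver_eq_Some_if_majority) (auto simp: K votes_eq not_le less_Suc_eq_le)
      then show ?thesis by simp
    qed simp
  qed
  have "measure_pmf.prob ?Q (?major t) = measure_pmf.prob ?Q (?major t \<inter> set_pmf ?Q)"
    by (simp add: measure_Int_set_pmf)
  also have "\<dots> \<le> measure_pmf.prob ?Q (?correct \<union> (\<Union>s\<in>S - {t}. ?major s))"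
    by (rule measure_pmf.finite_measure_mono[OF cover]) simp
  also have "\<dots> \<le> measure_pmf.prob ?Q ?correct + measure_pmf.prob ?Q (\<Union>s\<in>S - {t}. ?major s)"
    by (rule measure_Un_le) simp_all
  also have "\<dots> \<le> measure_pmf.prob ?Q ?correct + (\<Sum>s\<in>S - {t}. measure_pmf.prob ?Q (?major s))"
    using assms(1) by (intro add_left_mono measure_pmf.finite_measure_subadditive_finite) auto
  also have "\<dots> \<le> measure_pmf.prob ?Q ?correct + (\<Sum>s\<in>S - {t}. real (M choose (K + 1)) * r ^ (K + 1))"
    using wrong prob_Pi_pmf_many_hits_le[where I = "{..<M}" and q = q and d = d and k = "K + 1" and r = r]
    by (intro add_left_mono sum_mono) auto
  finally show ?thesis
    using prob_Pi_pmf_many_hits_ge[of "{..<M}" lo q t hi "K + 1" d] correct lo_hi assms(1,2)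
    by (simp add: card_Diff_singleton)
qed

lemma ood_err_bound_gt:
  assumes "2 \<le> N" "0 \<le> r" "r \<le> 1 / real N" and K: "real M * (1 - \<tau>) = real K"
  shows "real (N - 1) * (real (M choose (K + 1)) * r ^ (K + 1)) < ood_err_bound M N \<tau>"
proof -
  let ?C = "real (M choose (M div 2))"
  have "real (N - 1) * (real (M choose (K + 1)) * r ^ (K + 1)) \<le> real (N - 1) * (?C * (1 / real N) ^ (K + 1))"
    using assms by (intro mult_left_mono mult_mono power_mono) (auto simp: binomial_maximum)
  also have "\<dots> = (real (N - 1) / real N) * (?C * (1 / real N) ^ K)"
    by (simp add: field_simps)
  also have "\<dots> < ?C * (1 / real N) ^ K"
  proof -
    have "real (N - 1) / real N < 1" "0 < ?C * (1 / real N) ^ K"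
      using assms(1) by auto
    then show ?thesis
      using mult_strict_right_mono by fastforce
  qed
  also have "\<dots> = ood_err_bound M N \<tau>"
    using assms(1) unfolding ood_err_bound_def K
    by (simp add: powr_minus powr_realpow power_one_over divide_inverse power_inverse)
  finally show ?thesis .
qed

lemma prob_joint:
  "measure_pmf.prob (joint M p pred) E
     = (\<integral>x. measure_pmf.prob (Pi_pmf {..<M} undefined (\<lambda>i. pred i x)) {ys. (x, ys) \<in> E} \<partial>p)"
  unfolding joint_def measure_bind_pmf measure_map_pmf by (simp add: vimage_def)

lemma prob_joint_model_correct:
  assumes "i < M"
  shows "measure_pmf.prob (joint M p pred) {(x, ys). x \<in> Xin \<and> ys i = sx x}
       = (\<integral>x. indicator Xin x * pmf (pred i x) (sx x) \<partial>p)"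
  unfolding prob_joint
proof (intro Bochner_Integration.integral_cong refl)
  fix x
  have "measure_pmf.prob (Pi_pmf {..<M} undefined (\<lambda>i. pred i x)) {ys. ys i = sx x}
      = measure_pmf.prob (map_pmf (\<lambda>ys. ys i) (Pi_pmf {..<M} undefined (\<lambda>i. pred i x))) {sx x}"
    by (simp add: vimage_def)
  also have "\<dots> = pmf (pred i x) (sx x)"
    using assms by (simp add: Pi_pmf_component measure_pmf_single)
  finally show "measure_pmf.prob (Pi_pmf {..<M} undefined (\<lambda>i. pred i x)) {ys. (x, ys) \<in> {(x, ys). x \<in> Xin \<and> ys i = sx x}}
      = indicator Xin x * pmf (pred i x) (sx x)"
    by (cases "x \<in> Xin") auto
qed

lemma map_fst_joint: "map_pmf fst (joint M p pred) = p"
  by (simp add: joint_def map_bind_pmf map_pmf_comp bind_return_pmf')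

(* No hypothesis on alpha_in p Xin is needed: for alpha_in p Xin = 0 the quotient is 0. *)
lemma beta_acc_le_1: "beta_acc M p pred Xin sx i \<le> 1"
proof -
  have "measure_pmf.prob (joint M p pred) {(x, ys). x \<in> Xin \<and> ys i = sx x}
      \<le> measure_pmf.prob (joint M p pred) (fst -` Xin)"
    by (intro measure_pmf.finite_measure_mono) auto
  also have "\<dots> = alpha_in p Xin"
    by (simp add: alpha_in_def map_fst_joint flip: measure_map_pmf)
  finally show ?thesis
    unfolding beta_acc_def alpha_in_def by (auto simp: divide_le_eq_1 less_le)
qed

lemma in_dist_pred_correct:
  assumes "finite S" "2 \<le> card S"
    and sx_S: "\<forall>x \<in> set_pmf p. sx x \<in> S"
    and alpha_pos: "alpha_in p Xin > 0"
    and A2: "\<forall>i < M. \<forall>x \<in> set_pmf p \<inter> Xin. \<forall>s \<in> S. s \<noteq> sx x \<longrightarrow>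
               pmf (pred i x) s = (1 - beta_acc M p pred Xin sx i) / (real (card S) - 1)"
    and i: "i < M" and x: "x \<in> set_pmf p \<inter> Xin"
  shows "pmf (pred i x) (sx x) = beta_acc M p pred Xin sx i" and "set_pmf (pred i x) \<subseteq> S"
proof -
  let ?\<beta> = "beta_acc M p pred Xin sx i"
  have mass: "measure_pmf.prob (pred i y) S = pmf (pred i y) (sx y) + (1 - ?\<beta>)"
    if y: "y \<in> set_pmf p \<inter> Xin" for y
  proof -
    have "sx y \<in> S"
      using sx_S y by blast
    then have "measure_pmf.prob (pred i y) S = pmf (pred i y) (sx y) + (\<Sum>s\<in>S - {sx y}. pmf (pred i y) s)"
      using assms(1) by (simp add: measure_measure_pmf_finite sum.remove)
    also have "(\<Sum>s\<in>S - {sx y}. pmf (pred i y) s) = (\<Sum>s\<in>S - {sx y}. (1 - ?\<beta>) / (real (card S) - 1))"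
      using A2 i y by (intro sum.cong) auto
    also have "\<dots> = 1 - ?\<beta>"
      using assms(1,2) \<open>sx y \<in> S\<close> by (simp add: card_Diff_singleton of_nat_diff)
    finally show ?thesis .
  qed
  show correct: "pmf (pred i x) (sx x) = ?\<beta>"
  proof (rule eq_on_set_pmf_if_integral_eq_bound[where g = "\<lambda>y. pmf (pred i y) (sx y)", OF _ _ _ x])
    show "integrable (measure_pmf p) (\<lambda>y. pmf (pred i y) (sx y))"
      by (rule measure_pmf.integrable_const_bound[where B = 1]) (auto simp: pmf_le_1)
    show "pmf (pred i y) (sx y) \<le> ?\<beta>" if "y \<in> set_pmf p \<inter> Xin" for y
      using mass[OF that] measure_pmf.prob_le_1[of "pred i y" S] by simp
    show "(\<integral>y. indicator Xin y * pmf (pred i y) (sx y) \<partial>p) = measure_pmf.prob p Xin * ?\<beta>"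
      using alpha_pos by (simp add: beta_acc_def alpha_in_def prob_joint_model_correct[OF i, symmetric])
  qed
  have "measure_pmf.prob (pred i x) S = 1"
    using mass[OF x] correct by simp
  then show "set_pmf (pred i x) \<subseteq> S"
    by (subst (asm) measure_pmf.prob_eq_1) (auto simp: AE_measure_pmf_iff)
qed

lemma prob_ensolver_correct_in_dist_ge:
  fixes sel :: "(nat \<Rightarrow> 's) \<Rightarrow> 's"
  assumes "finite S" "2 \<le> card S"
    and sx_S: "\<forall>x \<in> set_pmf p. sx x \<in> S"
    and alpha_pos: "alpha_in p Xin > 0"
    and A2: "\<forall>i < M. \<forall>x \<in> set_pmf p \<inter> Xin. \<forall>s \<in> S. s \<noteq> sx x \<longrightarrow>
               pmf (pred i x) s = (1 - beta_acc M p pred Xin sx i) / (real (card S) - 1)"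
    and sel_max: "\<And>ys. \<forall>i<M. ys i \<in> S \<Longrightarrow> sel ys \<in> S \<and> (\<forall>s\<in>S. votes M ys s \<le> votes M ys (sel ys))"
    and beta_bounds: "\<And>i. i < M \<Longrightarrow> lo \<le> beta_acc M p pred Xin sx i \<and> beta_acc M p pred Xin sx i \<le> hi"
    and "0 \<le> lo" "hi \<le> 1"
    and K: "real M * (1 - \<tau>) = real K"
    and x: "x \<in> set_pmf p \<inter> Xin"
  shows "(\<Sum>j = K + 1..M. real (M choose j) * lo ^ j * (1 - hi) ^ (M - j))
           - real (card S - 1) * (real (M choose (K + 1)) * ((1 - lo) / (real (card S) - 1)) ^ (K + 1))
         \<le> measure_pmf.prob (Pi_pmf {..<M} undefined (\<lambda>i. pred i x))
              {ys. ensolver M S \<tau> (sel ys) ys = Some (sx x)}"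
proof (rule prob_ensolver_correct_ge[OF assms(1) _ _ _ \<open>0 \<le> lo\<close> \<open>hi \<le> 1\<close> _ K sel_max])
  show "pmf (pred i x) s \<le> (1 - lo) / (real (card S) - 1)" if "i < M" "s \<in> S - {sx x}" for i s
    using A2 that x beta_bounds[of i] assms(2) by (auto intro: divide_right_mono)
qed (use x sx_S beta_bounds in_dist_pred_correct[OF assms(1,2) sx_S alpha_pos A2 _ x] in auto)

theorem lemma3:
  fixes M N :: nat and \<tau> :: real
    and S :: "'s set" and p :: "'x pmf" and Xin :: "'x set" and sx :: "'x \<Rightarrow> 's"
    and pred :: "nat \<Rightarrow> 'x \<Rightarrow> 's pmf"
    and sel :: "'x \<Rightarrow> (nat \<Rightarrow> 's) \<Rightarrow> 's"
  assumes S_fin: "finite S" and N_def: "N = card S" and N_ge: "N \<ge> 2"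
    and sx_S: "\<forall>x \<in> set_pmf p. sx x \<in> S"
    and alpha_pos: "alpha_in p Xin > 0"
    and tau: "0 < \<tau>" "\<tau> \<le> 1"
    and tau_int: "\<exists>K::nat. K > 0 \<and> real M * (1 - \<tau>) = real K"
    and A1: "\<forall>i < M. beta_acc M p pred Xin sx i > 1 / real N"
    and A2: "\<forall>i < M. \<forall>x \<in> set_pmf p \<inter> Xin. \<forall>s \<in> S. s \<noteq> sx x \<longrightarrow>
               pmf (pred i x) s = (1 - beta_acc M p pred Xin sx i) / (real N - 1)"
    and A3: "\<forall>i < M. \<forall>x \<in> set_pmf p - Xin. \<forall>s \<in> S. pmf (pred i x) s = 1 / real N"
    and sel_max: "\<forall>x ys. (\<forall>i < M. ys i \<in> S) \<longrightarrow>
               sel x ys \<in> S \<and> (\<forall>s \<in> S. votes M ys s \<le> votes M ys (sel x ys))"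
  shows "measure_pmf.prob (joint M p pred)
           {(x, ys). ensolver M S \<tau> (sel x ys) ys = Some (sx x)}
         > alpha_in p Xin *
             (\<Sum>i = nat \<lfloor>real M * (1 - \<tau>)\<rfloor> + 1 .. M.
                real (M choose i)
                * (Min (beta_acc M p pred Xin sx ` {..<M})) ^ i
                * (1 - Max (beta_acc M p pred Xin sx ` {..<M})) ^ (M - i))
           - alpha_in p Xin * ood_err_bound M N \<tau>"
proof -
  obtain K :: nat where "0 < K" and K: "real M * (1 - \<tau>) = real K"
    using tau_int by blast
  then have "0 < M"
    by (cases M) auto
  define lo where "lo = Min (beta_acc M p pred Xin sx ` {..<M})"
  define hi where "hi = Max (beta_acc M p pred Xin sx ` {..<M})"
  define r where "r = (1 - lo) / (real N - 1)"
  define B where "B = (\<Sum>j = K + 1..M. real (M choose j) * lo ^ j * (1 - hi) ^ (M - j))"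
  define E where "E = real (N - 1) * (real (M choose (K + 1)) * r ^ (K + 1))"
  have beta_bounds: "lo \<le> beta_acc M p pred Xin sx i \<and> beta_acc M p pred Xin sx i \<le> hi" if "i < M" for i
    using that by (auto simp: lo_def hi_def)
  have "1 / real N < lo" "hi \<le> 1"
    using A1 beta_acc_le_1 \<open>0 < M\<close> unfolding lo_def hi_def by (subst Min_gr_iff Max_le_iff; auto)+
  moreover have "lo \<le> 1"
    using beta_bounds[OF \<open>0 < M\<close>] beta_acc_le_1 by (rule order_trans[OF conjunct1])
  ultimately have "0 \<le> lo" "0 \<le> r" "r \<le> 1 / real N"
    using N_ge by (auto simp: r_def field_simps intro: order_trans[of 0 "1 / real N"])
  have "B - E \<le> measure_pmf.prob (Pi_pmf {..<M} undefined (\<lambda>i. pred i x))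
                  {ys. ensolver M S \<tau> (sel x ys) ys = Some (sx x)}"
    if "x \<in> set_pmf p \<inter> Xin" for x
    unfolding B_def E_def r_def N_def
    using prob_ensolver_correct_in_dist_ge[OF S_fin N_ge[unfolded N_def] sx_S alpha_pos A2[unfolded N_def]
        _ beta_bounds \<open>0 \<le> lo\<close> \<open>hi \<le> 1\<close> K that] sel_max by blast
  then have "alpha_in p Xin * (B - E)
      \<le> measure_pmf.prob (joint M p pred) {(x, ys). ensolver M S \<tau> (sel x ys) ys = Some (sx x)}"
    unfolding prob_joint alpha_in_def
    by (intro integral_ge_prob_times_bound measure_pmf.integrable_const_bound[where B = 1]) auto
  moreover have "alpha_in p Xin * E < alpha_in p Xin * ood_err_bound M N \<tau>"
    unfolding E_def using alpha_pos ood_err_bound_gt[OF N_ge \<open>0 \<le> r\<close> \<open>r \<le> 1 / real N\<close> K] by simp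
  moreover have "nat \<lfloor>real M * (1 - \<tau>)\<rfloor> = K"
    using K by simp
  ultimately show ?thesis
    unfolding B_def lo_def hi_def by (simp add: right_diff_distrib)
qed

end
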